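(* Let $X$ be a normal topological space, and let $f,g\colon X\to Y$ and $f',g'\colon Y\to Z$ be continuous maps. Then $\mathrm{D}(f'\circ f,g'\circ g)\leq \mathrm{D}(f,g)+\mathrm{D}(f',g')$.
   Context: For continuous maps $f,g\colon X\to Y$, the homotopic distance $\mathrm{D}(f,g)$ is the least integer $n\geq 0$ such that there is an open cover $\{U_0,\dots,U_n\}$ of $X$ with $f|_{U_j}\simeq g|_{U_j}$ for all $j$; if no such cover exists, $\mathrm{D}(f,g)=\infty$. *)

theory Defs
  imports "HOL-Analysis.Analysis" "HOL-Library.Extended_Nat"
begin

definition hdist_cover :: "'a topology \<Rightarrow> 'b topology \<Rightarrow> ('a \<Rightarrow> 'b) \<Rightarrow> ('a \<Rightarrow> 'b) \<Rightarrow> nat \<Rightarrow> bool" where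
  "hdist_cover X Y f g n \<longleftrightarrow>
     (\<exists>U :: nat \<Rightarrow> 'a set.
        (\<forall>j\<le>n. openin X (U j)) \<and>
        topspace X \<subseteq> (\<Union>j\<le>n. U j) \<and>
        (\<forall>j\<le>n. homotopic_with (\<lambda>h. True) (subtopology X (U j)) Y f g))"

definition homotopic_distance :: "'a topology \<Rightarrow> 'b topology \<Rightarrow> ('a \<Rightarrow> 'b) \<Rightarrow> ('a \<Rightarrow> 'b) \<Rightarrow> enat" where
  "homotopic_distance X Y f g =
     (if \<exists>n. hdist_cover X Y f g n then enat (LEAST n. hdist_cover X Y f g n) else \<infinity>)"

end

theory Submission
  imports Defs
begin

text \<open>
  Take open covers U_0, ..., U_n of X and V_0, ..., V_m of Y with f \<simeq> g on each U_i and
  f' \<simeq> g' on each V_j. On U_i \<inter> f^-1(V_j) we have f' \<circ> f \<simeq> g' \<circ> f \<simeq> g' \<circ> g, so it suffices to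
  regroup the sets U_i \<inter> f^-1(V_j) into n+m+1 open sets, each a disjoint union of open subsets
  of them, since homotopies on disjoint open sets glue. By normality there are functions
  \<phi>_i, \<psi>_j whose positivity sets lie in U_i, resp. f^-1(V_j), and still cover X. For a set R of
  these n+m+2 functions containing some \<phi>_i and some \<psi>_j, take the open set where the members
  of R are positive and strictly exceed all other functions. Two such sets with the same |R| are
  disjoint and every point lies in one of them, so grouping by |R| \<in> {2, ..., n+m+2} does it.
\<close>

lemma openin_continuous_map_less:
  assumes "continuous_map X euclideanreal f" "continuous_map X euclideanreal g"
  shows "openin X {x \<in> topspace X. f x < g x}"
  using openin_continuous_map_preimage[OF continuous_map_diff[OF assms(2,1)], of "{0<..}"]
  by simp

lemma openin_continuous_map_positive:
  assumes "continuous_map X euclideanreal f"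
  shows "openin X {x \<in> topspace X. 0 < f x}"
  using openin_continuous_map_preimage[OF assms, of "{0<..}"] by simp

lemma normal_space_subordinate_functions:
  assumes normal: "normal_space X" and "finite I"
    and opn: "\<And>i. i \<in> I \<Longrightarrow> openin X (U i)" and cover: "topspace X \<subseteq> (\<Union>i\<in>I. U i)"
  obtains \<phi> :: "'i \<Rightarrow> 'a \<Rightarrow> real"
  where "\<And>i. i \<in> I \<Longrightarrow> continuous_map X euclideanreal (\<phi> i)"
    and "\<And>i x. i \<in> I \<Longrightarrow> x \<in> topspace X \<Longrightarrow> 0 < \<phi> i x \<Longrightarrow> x \<in> U i"
    and "\<And>x. x \<in> topspace X \<Longrightarrow> \<exists>i\<in>I. 0 < \<phi> i x"
proof -
  have "\<exists>\<phi> :: 'i \<Rightarrow> 'a \<Rightarrow> real.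
          (\<forall>i\<in>J. continuous_map X euclideanreal (\<phi> i) \<and> (\<forall>x\<in>topspace X. 0 < \<phi> i x \<longrightarrow> x \<in> U i)) \<and>
          (\<forall>x\<in>topspace X. (\<exists>i\<in>J. 0 < \<phi> i x) \<or> (\<exists>i\<in>I - J. x \<in> U i))"
    if "J \<subseteq> I" for J
    \<comment> \<open>the sets U i with i \<in> J have already been replaced by functions\<close>
    using finite_subset[OF that \<open>finite I\<close>] that
  proof (induction J rule: finite_induct)
    case empty
    then show ?case using cover by auto
  next
    case (insert a J)
    then obtain \<phi> :: "'i \<Rightarrow> 'a \<Rightarrow> real"
      where \<phi>: "\<forall>i\<in>J. continuous_map X euclideanreal (\<phi> i) \<and> (\<forall>x\<in>topspace X. 0 < \<phi> i x \<longrightarrow> x \<in> U i)"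
        and \<phi>_cover: "\<forall>x\<in>topspace X. (\<exists>i\<in>J. 0 < \<phi> i x) \<or> (\<exists>i\<in>I - J. x \<in> U i)"
      by auto
    define A where "A = (\<Union>i\<in>J. {x \<in> topspace X. 0 < \<phi> i x}) \<union> (\<Union>i\<in>I - insert a J. U i)"
    have "openin X A"
      unfolding A_def using \<phi> opn by (intro openin_Un openin_Union) (auto intro: openin_continuous_map_positive)
    moreover have "disjnt (topspace X - U a) (topspace X - A)"
      using \<phi>_cover by (auto simp: disjnt_def A_def)
    ultimately obtain f where f: "continuous_map X euclideanreal f"
      and f0: "f ` (topspace X - U a) \<subseteq> {0}" and f1: "f ` (topspace X - A) \<subseteq> {1}"
      using Urysohn_lemma_alt[OF normal] opn insert.prems by (metis closedin_diff closedin_topspace insert_subset)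
    have "\<forall>i\<in>insert a J. continuous_map X euclideanreal ((\<phi>(a := f)) i) \<and>
            (\<forall>x\<in>topspace X. 0 < (\<phi>(a := f)) i x \<longrightarrow> x \<in> U i)"
      using \<phi> f f0 insert.hyps(2) by (auto simp: image_subset_iff) (metis Diff_iff less_irrefl)
    moreover have "(\<exists>i\<in>insert a J. 0 < (\<phi>(a := f)) i x) \<or> (\<exists>i\<in>I - insert a J. x \<in> U i)"
      if "x \<in> topspace X" for x
    proof (cases "x \<in> A")
      case True
      then show ?thesis using insert.hyps(2) by (auto simp: A_def)
    next
      case False
      then show ?thesis using f1 that by auto
    qed
    ultimately show ?case by blast
  qed
  from this[OF order_refl] obtain \<phi> :: "'i \<Rightarrow> 'a \<Rightarrow> real"
    where "\<forall>i\<in>I. continuous_map X euclideanreal (\<phi> i) \<and> (\<forall>x\<in>topspace X. 0 < \<phi> i x \<longrightarrow> x \<in> U i)"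
      and "\<forall>x\<in>topspace X. \<exists>i\<in>I. 0 < \<phi> i x"
    by auto
  with that show ?thesis by blast
qed

definition leading_set :: "'a topology \<Rightarrow> ('i \<Rightarrow> 'a \<Rightarrow> real) \<Rightarrow> 'i set \<Rightarrow> 'i set \<Rightarrow> 'a set" where
  "leading_set X h K R =
     {x \<in> topspace X. \<forall>r\<in>R. 0 < h r x \<and> (\<forall>s\<in>K - R. h s x < h r x)}"

lemma openin_leading_set:
  assumes "finite K" "R \<subseteq> K" and cont: "\<And>r. r \<in> K \<Longrightarrow> continuous_map X euclideanreal (h r)"
  shows "openin X (leading_set X h K R)"
proof -
  have "finite R" using assms finite_subset by blast
  have "leading_set X h K R =
          (\<Inter>r\<in>R. {x \<in> topspace X. 0 < h r x} \<inter>
                  ((\<Inter>s\<in>K - R. {x \<in> topspace X. h s x < h r x}) \<inter> topspace X)) \<inter> topspace X"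
    by (auto simp: leading_set_def)
  also have "openin X \<dots>"
    using assms \<open>finite R\<close>
    by (intro openin_INT openin_Int) (auto intro!: openin_continuous_map_positive openin_continuous_map_less)
  finally show ?thesis .
qed

lemma disjnt_leading_set:
  assumes "finite K" "R \<subseteq> K" "S \<subseteq> K" "card R = card S" "R \<noteq> S"
  shows "disjnt (leading_set X h K R) (leading_set X h K S)"
proof -
  have "finite R" "finite S" using assms finite_subset by blast+
  then obtain r s where "r \<in> R - S" "s \<in> S - R"
  proof -
    have "\<not> R \<subseteq> S" "\<not> S \<subseteq> R"
      using assms(4,5) \<open>finite R\<close> \<open>finite S\<close> card_subset_eq by metis+
    then show ?thesis using that by blast
  qed
  have "h s x < h r x" if "x \<in> leading_set X h K R" for x
    using that assms(3) \<open>r \<in> R - S\<close> \<open>s \<in> S - R\<close> by (auto simp: leading_set_def)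
  moreover have "h r x < h s x" if "x \<in> leading_set X h K S" for x
    using that assms(2) \<open>r \<in> R - S\<close> \<open>s \<in> S - R\<close> by (auto simp: leading_set_def)
  ultimately show ?thesis
    by (meson disjnt_iff less_asym)
qed

lemma mem_leading_set_threshold:
  assumes "x \<in> topspace X" "0 < c"
  shows "x \<in> leading_set X h K {r \<in> K. c \<le> h r x}"
  using assms by (auto simp: leading_set_def)

lemma normal_space_join_open_covers:
  fixes U V :: "nat \<Rightarrow> 'a set"
  assumes normal: "normal_space X"
    and "\<And>i. i \<le> n \<Longrightarrow> openin X (U i)" "topspace X \<subseteq> (\<Union>i\<le>n. U i)"
    and "\<And>j. j \<le> m \<Longrightarrow> openin X (V j)" "topspace X \<subseteq> (\<Union>j\<le>m. V j)"
  obtains \<O> :: "nat \<Rightarrow> 'a set set"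
  where "\<And>k. pairwise disjnt (\<O> k)"
    and "\<And>k S. S \<in> \<O> k \<Longrightarrow> openin X S \<and> (\<exists>i\<le>n. \<exists>j\<le>m. S \<subseteq> U i \<inter> V j)"
    and "topspace X \<subseteq> (\<Union>k\<le>n + m. \<Union>(\<O> k))"
proof -
  obtain \<phi> where \<phi>_cont: "\<And>i. i \<le> n \<Longrightarrow> continuous_map X euclideanreal (\<phi> i)"
    and \<phi>_pos: "\<And>i x. i \<le> n \<Longrightarrow> x \<in> topspace X \<Longrightarrow> 0 < \<phi> i x \<Longrightarrow> x \<in> U i"
    and \<phi>_cover: "\<And>x. x \<in> topspace X \<Longrightarrow> \<exists>i\<le>n. 0 < \<phi> i x"
    using normal_space_subordinate_functions[OF normal finite_atMost, of n U, unfolded Bex_def atMost_iff]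
      assms(2,3) by blast
  obtain \<psi> where \<psi>_cont: "\<And>j. j \<le> m \<Longrightarrow> continuous_map X euclideanreal (\<psi> j)"
    and \<psi>_pos: "\<And>j x. j \<le> m \<Longrightarrow> x \<in> topspace X \<Longrightarrow> 0 < \<psi> j x \<Longrightarrow> x \<in> V j"
    and \<psi>_cover: "\<And>x. x \<in> topspace X \<Longrightarrow> \<exists>j\<le>m. 0 < \<psi> j x"
    using normal_space_subordinate_functions[OF normal finite_atMost, of m V, unfolded Bex_def atMost_iff]
      assms(4,5) by blast
  define h where "h = case_sum \<phi> \<psi>"
  define K where "K = Inl ` {..n} \<union> Inr ` {..m}"
  have "finite K"
    by (simp add: K_def)
  have card_K: "card K = n + m + 2"
    unfolding K_def by (subst card_Un_disjoint) (auto simp: card_image)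
  have h_cont: "continuous_map X euclideanreal (h r)" if "r \<in> K" for r
    using that \<phi>_cont \<psi>_cont by (auto simp: K_def h_def)
  \<comment> \<open>admissible sets have between 2 and n+m+2 elements, whence the shift by 2\<close>
  define admissible where "admissible k =
    {R. R \<subseteq> K \<and> card R = k + 2 \<and> (\<exists>i\<le>n. Inl i \<in> R) \<and> (\<exists>j\<le>m. Inr j \<in> R)}" for k
  define \<O> where "\<O> k = leading_set X h K ` admissible k" for k
  show ?thesis
  proof
    show "pairwise disjnt (\<O> k)" for k
      unfolding \<O>_def using \<open>finite K\<close>
      by (intro pairwise_imageI disjnt_leading_set) (auto simp: admissible_def)
  next
    fix k S assume "S \<in> \<O> k"
    then obtain R i j where R: "R \<in> admissible k" "S = leading_set X h K R"
      and ij: "i \<le> n" "Inl i \<in> R" "j \<le> m" "Inr j \<in> R"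
      by (auto simp: \<O>_def admissible_def)
    have "openin X S"
      using R \<open>finite K\<close> h_cont by (auto simp: admissible_def intro: openin_leading_set)
    moreover have "S \<subseteq> U i \<inter> V j"
      using R ij \<phi>_pos \<psi>_pos by (auto simp: leading_set_def h_def)
    ultimately show "openin X S \<and> (\<exists>i\<le>n. \<exists>j\<le>m. S \<subseteq> U i \<inter> V j)"
      using ij by blast
  next
    show "topspace X \<subseteq> (\<Union>k\<le>n + m. \<Union>(\<O> k))"
    proof
      fix x assume x: "x \<in> topspace X"
      obtain i j where ij: "i \<le> n" "0 < \<phi> i x" "j \<le> m" "0 < \<psi> j x"
        using \<phi>_cover \<psi>_cover x by blast
      define R where "R = {r \<in> K. min (\<phi> i x) (\<psi> j x) \<le> h r x}"
      have "Inl i \<in> R" "Inr j \<in> R"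
        using ij by (auto simp: R_def K_def h_def)
      have "R \<subseteq> K"
        by (auto simp: R_def)
      have "card {Inl i, Inr j} \<le> card R"
        using \<open>R \<subseteq> K\<close> \<open>finite K\<close> \<open>Inl i \<in> R\<close> \<open>Inr j \<in> R\<close>
        by (intro card_mono) (auto intro: finite_subset)
      moreover have "card R \<le> card K"
        using \<open>R \<subseteq> K\<close> \<open>finite K\<close> by (rule card_mono[rotated])
      ultimately have "R \<in> admissible (card R - 2)" "card R - 2 \<le> n + m"
        using \<open>R \<subseteq> K\<close> \<open>Inl i \<in> R\<close> \<open>Inr j \<in> R\<close> ij card_K by (auto simp: admissible_def)
      moreover have "x \<in> leading_set X h K R"
        unfolding R_def using x ij by (intro mem_leading_set_threshold) auto
      ultimately show "x \<in> (\<Union>k\<le>n + m. \<Union>(\<O> k))"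
        by (auto simp: \<O>_def)
    qed
  qed
qed

lemma homotopic_with_Union_disjoint_openin:
  assumes "pairwise disjnt \<O>" and opn: "\<And>S. S \<in> \<O> \<Longrightarrow> openin X S"
    and hom: "\<And>S. S \<in> \<O> \<Longrightarrow> homotopic_with (\<lambda>h. True) (subtopology X S) Y p q"
  shows "homotopic_with (\<lambda>h. True) (subtopology X (\<Union>\<O>)) Y p q"
proof -
  let ?I = "top_of_set {0..1::real}"
  let ?P = "prod_topology ?I (subtopology X (\<Union>\<O>))"
  have "\<forall>S\<in>\<O>. \<exists>H. continuous_map (prod_topology ?I (subtopology X S)) Y H \<and>
          (\<forall>x. H (0, x) = p x) \<and> (\<forall>x. H (1, x) = q x)"
    using hom unfolding homotopic_with_def by blast
  then obtain H where H: "\<And>S. S \<in> \<O> \<Longrightarrow> continuous_map (prod_topology ?I (subtopology X S)) Y (H S)"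
    and H0: "\<And>S x. S \<in> \<O> \<Longrightarrow> H S (0, x) = p x" and H1: "\<And>S x. S \<in> \<O> \<Longrightarrow> H S (1, x) = q x"
    by metis
  obtain G where G: "continuous_map ?P Y G"
    and G_eq: "\<And>z S. S \<in> \<O> \<Longrightarrow> z \<in> topspace ?P \<inter> ({0..1} \<times> S) \<Longrightarrow> G z = H S z"
  proof (rule pasting_lemma_exists[where I = \<O> and T = "\<lambda>S. {0..1} \<times> S" and f = H])
    show "topspace ?P \<subseteq> (\<Union>S\<in>\<O>. {0..1} \<times> S)"
      by auto
  next
    fix S assume "S \<in> \<O>"
    then have "openin (subtopology X (\<Union>\<O>)) S"
      using opn by (metis Int_absorb1 Union_upper openin_subtopology_Int2)
    then show "openin ?P ({0..1} \<times> S)"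
      by (simp add: openin_prod_Times_iff)
    have "subtopology ?P ({0..1} \<times> S) = prod_topology ?I (subtopology X S)"
      using \<open>S \<in> \<O>\<close> by (simp add: subtopology_Times subtopology_subtopology Int_absorb1 Union_upper)
    then show "continuous_map (subtopology ?P ({0..1} \<times> S)) Y (H S)"
      using H[OF \<open>S \<in> \<O>\<close>] by simp
  next
    fix S S' z assume "S \<in> \<O>" "S' \<in> \<O>" "z \<in> topspace ?P \<inter> ({0..1} \<times> S) \<inter> ({0..1} \<times> S')"
    then have "S = S'"
      using \<open>pairwise disjnt \<O>\<close> by (metis IntD1 IntD2 disjnt_iff mem_Times_iff pairwiseD)
    then show "H S z = H S' z"
      by simp
  qed (rule that)
  have "G (0, x) = p x \<and> G (1, x) = q x" if x: "x \<in> topspace (subtopology X (\<Union>\<O>))" for x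
  proof -
    obtain S where "S \<in> \<O>" "x \<in> S"
      using x by auto
    then show ?thesis
      using x G_eq[of S "(0, x)"] G_eq[of S "(1, x)"] H0 H1 by simp
  qed
  with G show ?thesis
    by (subst homotopic_with) auto
qed

lemma homotopic_with_compose_subtopology:
  assumes hom: "homotopic_with (\<lambda>h. True) X Y f g"
    and hom': "homotopic_with (\<lambda>h. True) (subtopology Y V) Z f' g'"
    and "f ` topspace X \<subseteq> V" and "continuous_map Y Z g'"
  shows "homotopic_with (\<lambda>h. True) X Z (f' \<circ> f) (g' \<circ> g)"
proof -
  have "continuous_map X (subtopology Y V) f"
    using hom assms(3)
    by (simp add: continuous_map_in_subtopology homotopic_with_imp_continuous_maps image_subset_iff_funcset)
  with hom' have "homotopic_with (\<lambda>h. True) X Z (f' \<circ> f) (g' \<circ> f)"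
    by (rule homotopic_with_compose_continuous_map_right) simp
  moreover have "homotopic_with (\<lambda>h. True) X Z (g' \<circ> f) (g' \<circ> g)"
    using hom assms(4) by (rule homotopic_with_compose_continuous_map_left) simp
  ultimately show ?thesis
    by (rule homotopic_with_trans)
qed

lemma hdist_cover_compose:
  assumes normal: "normal_space X" and f: "continuous_map X Y f" and g': "continuous_map Y Z g'"
    and "hdist_cover X Y f g n" and "hdist_cover Y Z f' g' m"
  shows "hdist_cover X Z (f' \<circ> f) (g' \<circ> g) (n + m)"
proof -
  obtain U where U_open: "\<And>i. i \<le> n \<Longrightarrow> openin X (U i)" and U_cover: "topspace X \<subseteq> (\<Union>i\<le>n. U i)"
    and U_hom: "\<And>i. i \<le> n \<Longrightarrow> homotopic_with (\<lambda>h. True) (subtopology X (U i)) Y f g"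
    using \<open>hdist_cover X Y f g n\<close> unfolding hdist_cover_def by blast
  obtain V where V_open: "\<And>j. j \<le> m \<Longrightarrow> openin Y (V j)" and V_cover: "topspace Y \<subseteq> (\<Union>j\<le>m. V j)"
    and V_hom: "\<And>j. j \<le> m \<Longrightarrow> homotopic_with (\<lambda>h. True) (subtopology Y (V j)) Z f' g'"
    using \<open>hdist_cover Y Z f' g' m\<close> unfolding hdist_cover_def by blast
  define V' where "V' j = {x \<in> topspace X. f x \<in> V j}" for j
  have V'_open: "openin X (V' j)" if "j \<le> m" for j
    unfolding V'_def using openin_continuous_map_preimage[OF f V_open[OF that]] .
  have V'_cover: "topspace X \<subseteq> (\<Union>j\<le>m. V' j)"
    using V_cover continuous_map_image_subset_topspace[OF f] by (auto simp: V'_def)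
  obtain \<O> where \<O>_disjnt: "\<And>k. pairwise disjnt (\<O> k)"
    and \<O>_sub: "\<And>k S. S \<in> \<O> k \<Longrightarrow> openin X S \<and> (\<exists>i\<le>n. \<exists>j\<le>m. S \<subseteq> U i \<inter> V' j)"
    and \<O>_cover: "topspace X \<subseteq> (\<Union>k\<le>n + m. \<Union>(\<O> k))"
    using normal_space_join_open_covers[OF normal U_open U_cover V'_open V'_cover] by blast
  have "homotopic_with (\<lambda>h. True) (subtopology X S) Z (f' \<circ> f) (g' \<circ> g)" if S: "S \<in> \<O> k" for k S
  proof -
    obtain i j where ij: "i \<le> n" "j \<le> m" "S \<subseteq> U i" "S \<subseteq> V' j"
      using \<O>_sub[OF S] by blast
    have hom_S: "homotopic_with (\<lambda>h. True) (subtopology X S) Y f g"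
      using homotopic_from_subtopology[OF U_hom[OF ij(1)], of S] ij(3)
      by (simp add: subtopology_subtopology Int_absorb1)
    have "f ` topspace (subtopology X S) \<subseteq> V j"
      using ij(4) by (auto simp: V'_def)
    with hom_S V_hom[OF ij(2)] g' show ?thesis
      by (intro homotopic_with_compose_subtopology)
  qed
  then show ?thesis
    unfolding hdist_cover_def using \<O>_disjnt \<O>_sub \<O>_cover
    by (intro exI[of _ "\<lambda>k. \<Union>(\<O> k)"] conjI allI impI homotopic_with_Union_disjoint_openin) auto
qed

lemma homotopic_distance_le:
  "hdist_cover X Y f g n \<Longrightarrow> homotopic_distance X Y f g \<le> enat n"
  unfolding homotopic_distance_def by (auto intro: Least_le)

lemma homotopic_distance_eq_enatD:
  "homotopic_distance X Y f g = enat n \<Longrightarrow> hdist_cover X Y f g n"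
  unfolding homotopic_distance_def by (metis LeastI enat.inject enat.distinct(2))

theorem proposition3p19:
  fixes X :: "'a topology" and Y :: "'b topology" and Z :: "'c topology"
    and f g :: "'a \<Rightarrow> 'b" and f' g' :: "'b \<Rightarrow> 'c"
  assumes "normal_space X"
    and "continuous_map X Y f" and "continuous_map X Y g"
    and "continuous_map Y Z f'" and "continuous_map Y Z g'"
  shows "homotopic_distance X Z (f' \<circ> f) (g' \<circ> g)
           \<le> homotopic_distance X Y f g + homotopic_distance Y Z f' g'"
proof (cases "homotopic_distance X Y f g = \<infinity> \<or> homotopic_distance Y Z f' g' = \<infinity>")
  case True
  then show ?thesis by auto
next
  case False
  then obtain n m where n: "homotopic_distance X Y f g = enat n"
    and m: "homotopic_distance Y Z f' g' = enat m"
    by auto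
  have "hdist_cover X Z (f' \<circ> f) (g' \<circ> g) (n + m)"
    using hdist_cover_compose[OF assms(1,2,5)] homotopic_distance_eq_enatD[OF n]
      homotopic_distance_eq_enatD[OF m] .
  then show ?thesis
    unfolding n m by (simp add: homotopic_distance_le)
qed

end
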